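(* (1) The set of reaction networks that have the capacity for weak reversibility strictly contains the set of weakly reversible reaction networks. (2) The set of reaction networks that have the capacity to be endotactic strictly contains the set of endotactic reaction networks.
   Context: A reaction network (E-graph) $\mathcal{G}=(\mathcal{V},\mathcal{E})$ is a finite directed graph whose nodes are distinct elements of a finite set $Y\subset\mathbb{R}^d_{\ge 0}$, with $\mathcal{V}\neq\emptyset$, every node incident to at least one edge, and no edge from a node to itself. For an edge $e$, $\mathbf{s}(e)$ is its source node, $\mathbf{t}(e)$ its target node, and $\mathbf{v}(e)=\mathbf{t}(e)-\mathbf{s}(e)$ its reaction vector. Given positive rate constants $(k_e)_{e\in\mathcal{E}}$, $\mathcal{G}$ generates the mass-action system $\frac{d\mathbf{x}}{dt}=\sum_{e\in\mathcal{E}}k_e\mathbf{x}^{\mathbf{s}(e)}\mathbf{v}(e)$, where $\mathbf{x}^{\mathbf{y}}=\prod_i x_i^{y_i}$ and $0^0=1$. Two networks $\mathcal{G}_1,\mathcal{G}_2$ have the capacity for dynamical equivalence if there exist positive rate constants for each such that the generated right-hand sides coincide for all $\mathbf{x}$. $\mathcal{G}$ is weakly reversible if every edge lies in a directed cycle. $\mathcal{G}$ is endotactic if for every $\mathbf{w}\in\mathbb{R}^d$ and every $e_i\in\mathcal{E}$ with $\mathbf{w}\cdot\mathbf{v}(e_i)<0$ there exists $e_j\in\mathcal{E}$ with $\mathbf{w}\cdot(\mathbf{s}(e_j)-\mathbf{s}(e_i))<0$ and $\mathbf{w}\cdot\mathbf{v}(e_j)>0$. A network has the capacity for weak reversibility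 (resp. to be endotactic) if it has the capacity for dynamical equivalence with some weakly reversible (resp. endotactic) network. *)

theory Defs
  imports Complex_Main
begin

text \<open>Vectors of R^d are represented as functions nat => real vanishing outside {..<d}.
  A reaction network (E-graph) in dimension d is its finite set of edges, each edge being
  the pair (source, target); the node set is the set of endpoints of edges.\<close>

type_synonym vec = "nat \<Rightarrow> real"
type_synonym edge = "vec \<times> vec"

definition nonneg_vec :: "nat \<Rightarrow> vec \<Rightarrow> bool" where
  "nonneg_vec d y \<longleftrightarrow> (\<forall>i<d. 0 \<le> y i) \<and> (\<forall>i\<ge>d. y i = 0)"

definition reaction_network :: "nat \<Rightarrow> edge set \<Rightarrow> bool" where
  "reaction_network d E \<longleftrightarrow> finite E \<and> E \<noteq> {} \<and>
     (\<forall>(s, t)\<in>E. s \<noteq> t \<and> nonneg_vec d s \<and> nonneg_vec d t)"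

definition src :: "edge \<Rightarrow> vec" where "src e = fst e"
definition tgt :: "edge \<Rightarrow> vec" where "tgt e = snd e"
definition rvec :: "edge \<Rightarrow> vec" where "rvec e = (\<lambda>i. tgt e i - src e i)"

text \<open>Monomial x^y = prod_i x_i^(y_i), with the convention 0^0 = 1.\<close>
definition monomial :: "nat \<Rightarrow> vec \<Rightarrow> vec \<Rightarrow> real" where
  "monomial d x y = (\<Prod>i<d. if y i = 0 then 1 else x i powr y i)"

definition mass_action :: "nat \<Rightarrow> edge set \<Rightarrow> (edge \<Rightarrow> real) \<Rightarrow> vec \<Rightarrow> vec" where
  "mass_action d E k x = (\<lambda>i. \<Sum>e\<in>E. k e * monomial d x (src e) * rvec e i)"

definition dyn_equiv_capacity :: "nat \<Rightarrow> edge set \<Rightarrow> edge set \<Rightarrow> bool" where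
  "dyn_equiv_capacity d E1 E2 \<longleftrightarrow>
     (\<exists>k1 k2. (\<forall>e\<in>E1. 0 < k1 e) \<and> (\<forall>e\<in>E2. 0 < k2 e) \<and>
        (\<forall>x. (\<forall>i<d. 0 \<le> x i) \<longrightarrow> (\<forall>i<d. mass_action d E1 k1 x i = mass_action d E2 k2 x i)))"

definition weakly_reversible :: "edge set \<Rightarrow> bool" where
  "weakly_reversible E \<longleftrightarrow> (\<forall>(s, t)\<in>E. (t, s) \<in> E\<^sup>*)"

definition dotp :: "nat \<Rightarrow> vec \<Rightarrow> vec \<Rightarrow> real" where
  "dotp d w v = (\<Sum>i<d. w i * v i)"

definition endotactic :: "nat \<Rightarrow> edge set \<Rightarrow> bool" where
  "endotactic d E \<longleftrightarrow>
     (\<forall>w ei. ei \<in> E \<and> dotp d w (rvec ei) < 0 \<longrightarrow>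
        (\<exists>ej\<in>E. dotp d w (\<lambda>i. src ej i - src ei i) < 0 \<and> dotp d w (rvec ej) > 0))"

definition capacity_weakly_reversible :: "nat \<Rightarrow> edge set \<Rightarrow> bool" where
  "capacity_weakly_reversible d E \<longleftrightarrow>
     (\<exists>E'. reaction_network d E' \<and> weakly_reversible E' \<and> dyn_equiv_capacity d E E')"

definition capacity_endotactic :: "nat \<Rightarrow> edge set \<Rightarrow> bool" where
  "capacity_endotactic d E \<longleftrightarrow>
     (\<exists>E'. reaction_network d E' \<and> endotactic d E' \<and> dyn_equiv_capacity d E E')"

end

theory Submission
  imports Defs
begin

text \<open>Every network is trivially dynamically equivalent to itself, so the inclusions are
  immediate; strictness is witnessed by one species X. The network X \<rightarrow> 0 (rate 2),
  X \<rightarrow> 2X, 0 \<rightarrow> X (rate 1) has right-hand side 1 - x, the same as the reversible pair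
  0 \<rightleftharpoons> X, which is both weakly reversible and endotactic. But 2X is a sink, so the
  network is not weakly reversible, and for w = -1 the reaction X \<rightarrow> 2X points against w
  while no source lies beyond X in direction -w, so it is not endotactic.\<close>

lemma dyn_equiv_capacity_refl: "dyn_equiv_capacity d E E"
  unfolding dyn_equiv_capacity_def by (rule exI[of _ "\<lambda>_. 1"], rule exI[of _ "\<lambda>_. 1"]) simp

lemma weakly_reversible_imp_capacity:
  "weakly_reversible E \<Longrightarrow> reaction_network d E \<Longrightarrow> capacity_weakly_reversible d E"
  using dyn_equiv_capacity_refl unfolding capacity_weakly_reversible_def by blast

lemma endotactic_imp_capacity:
  "endotactic d E \<Longrightarrow> reaction_network d E \<Longrightarrow> capacity_endotactic d E"
  using dyn_equiv_capacity_refl unfolding capacity_endotactic_def by blast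

lemma not_weakly_reversible_if_sink:
  assumes "(s, t) \<in> E" and "s \<noteq> t" and "\<And>u. (t, u) \<notin> E"
  shows "\<not> weakly_reversible E"
proof
  assume "weakly_reversible E"
  with assms(1) have "(t, s) \<in> E\<^sup>*" unfolding weakly_reversible_def by blast
  then show False
    by (rule converse_rtranclE) (use assms in auto)
qed

lemma dotp_one [simp]: "dotp (Suc 0) w v = w 0 * v 0"
  by (simp add: dotp_def)

lemma monomial_one: "monomial (Suc 0) x y = (if y 0 = 0 then 1 else x 0 powr y 0)"
  by (simp add: monomial_def)

definition axis_pt :: "real \<Rightarrow> vec" where
  "axis_pt a = (\<lambda>i. if i = 0 then a else 0)"

lemma axis_pt_zero [simp]: "axis_pt a 0 = a"
  by (simp add: axis_pt_def)

lemma axis_pt_eq_iff [simp]: "axis_pt a = axis_pt b \<longleftrightarrow> a = b"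
  by (metis axis_pt_zero)

lemma nonneg_vec_axis_pt: "0 < d \<Longrightarrow> 0 \<le> a \<Longrightarrow> nonneg_vec d (axis_pt a)"
  by (simp add: nonneg_vec_def axis_pt_def)

definition sink_network :: "edge set" where
  "sink_network = {(axis_pt 1, axis_pt 0), (axis_pt 1, axis_pt 2), (axis_pt 0, axis_pt 1)}"

definition reversible_network :: "edge set" where
  "reversible_network = {(axis_pt 0, axis_pt 1), (axis_pt 1, axis_pt 0)}"

lemma reaction_network_sink_network: "reaction_network 1 sink_network"
  by (simp add: reaction_network_def sink_network_def nonneg_vec_axis_pt)

lemma reaction_network_reversible_network: "reaction_network 1 reversible_network"
  by (simp add: reaction_network_def reversible_network_def nonneg_vec_axis_pt)

lemma dyn_equiv_capacity_sink_reversible: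
  "dyn_equiv_capacity 1 sink_network reversible_network"
  unfolding dyn_equiv_capacity_def
proof (rule exI[of _ "\<lambda>e. if e = (axis_pt 1, axis_pt 0) then 2 else 1"],
    rule exI[of _ "\<lambda>_. 1"], intro conjI allI impI)
  fix x :: vec and i :: nat
  assume "\<forall>i<1. 0 \<le> x i" and "i < 1"
  then have "0 \<le> x 0" and "i = 0" by simp_all
  then show "mass_action 1 sink_network (\<lambda>e. if e = (axis_pt 1, axis_pt 0) then 2 else 1) x i
      = mass_action 1 reversible_network (\<lambda>_. 1) x i"
    by (simp add: mass_action_def sink_network_def reversible_network_def monomial_one
        src_def tgt_def rvec_def)
qed (simp_all add: sink_network_def)

lemma weakly_reversible_reversible_network: "weakly_reversible reversible_network"
  unfolding weakly_reversible_def reversible_network_def by auto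

lemma not_weakly_reversible_sink_network: "\<not> weakly_reversible sink_network"
  by (rule not_weakly_reversible_if_sink[of "axis_pt 1" "axis_pt 2"])
    (auto simp: sink_network_def)

lemma endotactic_reversible_network: "endotactic 1 reversible_network"
  unfolding endotactic_def
proof (intro allI impI)
  fix w ei assume ei: "ei \<in> reversible_network \<and> dotp 1 w (rvec ei) < 0"
  then consider "ei = (axis_pt 0, axis_pt 1)" "w 0 < 0" | "ei = (axis_pt 1, axis_pt 0)" "0 < w 0"
    by (auto simp: reversible_network_def rvec_def src_def tgt_def)
  then show "\<exists>ej\<in>reversible_network. dotp 1 w (\<lambda>i. src ej i - src ei i) < 0
      \<and> 0 < dotp 1 w (rvec ej)"
  proof cases
    case 1
    then show ?thesis
      by (intro bexI[of _ "(axis_pt 1, axis_pt 0)"])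
        (auto simp: reversible_network_def rvec_def src_def tgt_def)
  next
    case 2
    then show ?thesis
      by (intro bexI[of _ "(axis_pt 0, axis_pt 1)"])
        (auto simp: reversible_network_def rvec_def src_def tgt_def)
  qed
qed

lemma not_endotactic_sink_network: "\<not> endotactic 1 sink_network"
proof
  assume "endotactic 1 sink_network"
  moreover have "(axis_pt 1, axis_pt 2) \<in> sink_network"
    and "dotp 1 (\<lambda>_. -1) (rvec (axis_pt 1, axis_pt 2)) < 0"
    by (simp_all add: sink_network_def rvec_def src_def tgt_def)
  ultimately obtain ej where "ej \<in> sink_network"
    and "dotp 1 (\<lambda>_. -1) (\<lambda>i. src ej i - axis_pt 1 i) < 0"
    and "0 < dotp 1 (\<lambda>_. -1) (rvec ej)"
    unfolding endotactic_def src_def by fastforce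
  then show False
    by (auto simp: sink_network_def rvec_def src_def tgt_def)
qed

theorem theorem1:
  shows "{(d, E). reaction_network d E \<and> weakly_reversible E}
           \<subset> {(d, E). reaction_network d E \<and> capacity_weakly_reversible d E}
       \<and> {(d, E). reaction_network d E \<and> endotactic d E}
           \<subset> {(d, E). reaction_network d E \<and> capacity_endotactic d E}"
proof (intro conjI psubsetI subsetI)
  have "capacity_weakly_reversible 1 sink_network"
    unfolding capacity_weakly_reversible_def
    using reaction_network_reversible_network weakly_reversible_reversible_network
      dyn_equiv_capacity_sink_reversible by blast
  with reaction_network_sink_network not_weakly_reversible_sink_network
  show "{(d, E). reaction_network d E \<and> weakly_reversible E}
      \<noteq> {(d, E). reaction_network d E \<and> capacity_weakly_reversible d E}"
    by blast
  have "capacity_endotactic 1 sink_network"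
    unfolding capacity_endotactic_def
    using reaction_network_reversible_network endotactic_reversible_network
      dyn_equiv_capacity_sink_reversible by blast
  with reaction_network_sink_network not_endotactic_sink_network
  show "{(d, E). reaction_network d E \<and> endotactic d E}
      \<noteq> {(d, E). reaction_network d E \<and> capacity_endotactic d E}"
    by blast
qed (auto intro: weakly_reversible_imp_capacity endotactic_imp_capacity)

end
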